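(* Let $W$ be a standard Brownian motion and let $f$ be a non-decreasing càdlàg function on $[-1,\infty)$. For $t>0$ set $A_t:=\{\inf_{0\le s\le t}(W_s-f_s)=0\}$. Then $\mathbb{P}(A_t)=0$ for all $t>0$. *)

theory Defs
  imports "HOL-Probability.Probability"
begin

definition std_BM :: "'a measure \<Rightarrow> (real \<Rightarrow> 'a \<Rightarrow> real) \<Rightarrow> bool" where
  "std_BM M W \<longleftrightarrow>
     prob_space M \<and>
     (\<forall>t\<ge>0. W t \<in> borel_measurable M) \<and>
     (\<forall>\<omega>\<in>space M. W 0 \<omega> = 0) \<and>
     (\<forall>\<omega>\<in>space M. continuous_on {0..} (\<lambda>t. W t \<omega>)) \<and>
     (\<forall>s t. 0 \<le> s \<longrightarrow> s < t \<longrightarrow>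
        distributed M lborel (\<lambda>\<omega>. W t \<omega> - W s \<omega>) (\<lambda>x. ennreal (normal_density 0 (sqrt (t - s)) x))) \<and>
     (\<forall>ts. sorted_wrt (<) ts \<longrightarrow> (\<forall>t\<in>set ts. 0 \<le> t) \<longrightarrow>
        prob_space.indep_vars M (\<lambda>_. borel) (\<lambda>i \<omega>. W (ts ! Suc i) \<omega> - W (ts ! i) \<omega>) {..<length ts - 1})"

text \<open>Cadlag on S: right-continuous at every point of S, with left limits at every
  point of S (vacuous where S has no points to the left).\<close>
definition cadlag_on :: "real set \<Rightarrow> (real \<Rightarrow> real) \<Rightarrow> bool" where
  "cadlag_on S f \<longleftrightarrow>
     (\<forall>x\<in>S. (f \<longlongrightarrow> f x) (at x within (S \<inter> {x<..}))) \<and>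
     (\<forall>x\<in>S. \<exists>l. (f \<longlongrightarrow> l) (at x within (S \<inter> {..<x})))"

end

theory Submission
  imports Defs
begin

text \<open>Write \<open>h = W - f\<close>. If \<open>f 0 \<ge> 0\<close>, a zero infimum of \<open>h\<close> on \<open>[0, t]\<close> forces
  \<open>W \<ge> f \<ge> f 0 \<ge> 0\<close> there. At the geometric times \<open>t r\<^sup>K < \<dots> < t r < t\<close> the increments of
  \<open>W\<close> are independent centred Gaussians, each dropping below minus a quarter of its standard
  deviation with probability at least \<open>1/4\<close>, while for small \<open>r\<close> the value of \<open>W\<close> at the start
  of an increment rarely exceeds that quarter. Hence \<open>W\<close> stays nonnegative with probability at
  most \<open>(3/4)\<^sup>K + 16 K r / (1 - r)\<close>, which can be made arbitrarily small.

  If \<open>f 0 < 0\<close>, then \<open>h 0 > 0\<close> and right-continuity of \<open>h\<close> shows that a zero infimum on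
  \<open>[0, t]\<close> is a zero infimum on \<open>[\<delta>, t]\<close> for some rational \<open>\<delta> > 0\<close>. The infimum on \<open>[\<delta>, t]\<close> is the
  limit of the minima over dyadic grids, and each such minimum is \<open>W \<delta>\<close> plus a variable
  independent of \<open>W \<delta>\<close>. As \<open>W \<delta>\<close> has density at most \<open>1 / sqrt \<delta>\<close>, the grid minima lie in
  \<open>[-\<epsilon>, \<epsilon>]\<close> with probability at most \<open>2 \<epsilon> / sqrt \<delta>\<close>, so the limit vanishes only on a null set.\<close>

lemma normal_density_le_inverse_std:
  assumes "0 < \<sigma>"
  shows "normal_density \<mu> \<sigma> x \<le> 1 / \<sigma>"
proof -
  have "exp (- (x - \<mu>)\<^sup>2 / (2 * \<sigma>\<^sup>2)) \<le> 1"
    by simp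
  then have "normal_density \<mu> \<sigma> x \<le> 1 / sqrt (2 * pi * \<sigma>\<^sup>2)"
    unfolding normal_density_def by (simp add: divide_right_mono)
  also have "sqrt (2 * pi * \<sigma>\<^sup>2) = sqrt (2 * pi) * \<sigma>"
    using assms by (simp add: real_sqrt_mult)
  also have "1 / (sqrt (2 * pi) * \<sigma>) \<le> 1 / \<sigma>"
    using assms pi_gt3 by (simp add: divide_simps)
  finally show ?thesis .
qed

lemma (in prob_space) prob_interval_le_of_density_bound:
  assumes X: "distributed M lborel X (\<lambda>x. ennreal (g x))"
    and g_le: "\<And>x. g x \<le> C" and "0 \<le> C" and "a \<le> b"
  shows "prob (X -` {a..b} \<inter> space M) \<le> (b - a) * C"
proof -
  have "emeasure M (X -` {a..b} \<inter> space M) = (\<integral>\<^sup>+x. ennreal (g x) * indicator {a..b} x \<partial>lborel)"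
    using X by (rule distributed_emeasure) simp
  also have "\<dots> \<le> (\<integral>\<^sup>+x. ennreal C * indicator {a..b} x \<partial>lborel)"
    by (intro nn_integral_mono mult_right_mono ennreal_leI g_le) auto
  also have "\<dots> = ennreal ((b - a) * C)"
    using assms by (simp add: nn_integral_cmult ennreal_mult[symmetric] mult.commute)
  finally show ?thesis
    using assms by (simp add: emeasure_eq_measure ennreal_le_iff)
qed

lemma (in prob_space) prob_abs_add_le_of_indep_density_bound:
  assumes indep: "indep_var borel X borel Z"
    and X: "distributed M lborel X (\<lambda>x. ennreal (g x))"
    and g_le: "\<And>x. g x \<le> C" and "0 \<le> C" and "0 \<le> \<epsilon>"
  shows "prob {\<omega>\<in>space M. \<bar>X \<omega> + Z \<omega>\<bar> \<le> \<epsilon>} \<le> 2 * \<epsilon> * C"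
proof -
  have [measurable]: "X \<in> borel_measurable M" "Z \<in> borel_measurable M"
    using indep by (auto dest: indep_var_rv1 indep_var_rv2)
  interpret PX: prob_space "distr M borel X" by (rule prob_space_distr) simp
  interpret PZ: prob_space "distr M borel Z" by (rule prob_space_distr) simp
  interpret pair_sigma_finite "distr M borel X" "distr M borel Z" ..
  \<comment> \<open>Integrate over the product of the laws; every slice of \<open>S\<close> is an interval of length \<open>2 \<epsilon>\<close>.\<close>
  define S where "S = {p \<in> space (borel \<Otimes>\<^sub>M borel). \<bar>fst p + snd p\<bar> \<le> (\<epsilon>::real)}"
  have S_borel: "S \<in> sets (borel \<Otimes>\<^sub>M borel)"
    unfolding S_def by measurable
  then have S: "S \<in> sets (distr M borel X \<Otimes>\<^sub>M distr M borel Z)"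
    by (metis sets_distr sets_pair_measure_cong)
  have "{\<omega>\<in>space M. \<bar>X \<omega> + Z \<omega>\<bar> \<le> \<epsilon>} = (\<lambda>\<omega>. (X \<omega>, Z \<omega>)) -` S \<inter> space M"
    by (auto simp: S_def space_pair_measure)
  also have "emeasure M \<dots> = emeasure (distr M (borel \<Otimes>\<^sub>M borel) (\<lambda>\<omega>. (X \<omega>, Z \<omega>))) S"
    using S_borel by (simp add: emeasure_distr)
  also have "\<dots> = emeasure (distr M borel X \<Otimes>\<^sub>M distr M borel Z) S"
    using indep by (simp add: indep_var_distribution_eq)
  also have "\<dots> = (\<integral>\<^sup>+z. emeasure (distr M borel X) ((\<lambda>x. (x, z)) -` S) \<partial>distr M borel Z)"
    using S by (rule emeasure_pair_measure_alt2)
  also have "\<dots> \<le> (\<integral>\<^sup>+z. ennreal (2 * \<epsilon> * C) \<partial>distr M borel Z)"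
  proof (rule nn_integral_mono)
    fix z :: real
    have "(\<lambda>x. (x, z)) -` S = {-z-\<epsilon>..\<epsilon>-z}"
      by (auto simp: S_def space_pair_measure)
    then have "emeasure (distr M borel X) ((\<lambda>x. (x, z)) -` S) = prob (X -` {-z-\<epsilon>..\<epsilon>-z} \<inter> space M)"
      by (simp add: emeasure_distr emeasure_eq_measure)
    also have "\<dots> \<le> ennreal (2 * \<epsilon> * C)"
      using prob_interval_le_of_density_bound[OF X g_le, of "-z-\<epsilon>" "\<epsilon>-z"] assms
      by (intro ennreal_leI) (simp add: algebra_simps)
    finally show "emeasure (distr M borel X) ((\<lambda>x. (x, z)) -` S) \<le> ennreal (2 * \<epsilon> * C)" .
  qed
  also have "\<dots> = ennreal (2 * \<epsilon> * C)"
    using PZ.emeasure_space_1 by simp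
  finally show ?thesis
    using assms by (simp add: emeasure_eq_measure ennreal_le_iff)
qed

lemma (in prob_space) prob_normal_ge_neg_le:
  assumes X: "distributed M lborel X (\<lambda>x. ennreal (normal_density 0 \<sigma> x))"
    and "0 < \<sigma>" and "0 \<le> a"
  shows "prob {\<omega>\<in>space M. -a \<le> X \<omega>} \<le> 1/2 + a / \<sigma>"
proof -
  have [measurable]: "X \<in> borel_measurable M"
    using distributed_measurable[OF X] by simp
  have "distributed M lborel (\<lambda>\<omega>. 0 + (-1) * X \<omega>) (\<lambda>x. ennreal (normal_density 0 \<sigma> x))"
    using normal_density_affine[OF X, of "-1" 0] \<open>0 < \<sigma>\<close> by simp
  then have negX: "distributed M lborel (\<lambda>\<omega>. - X \<omega>) (\<lambda>x. ennreal (normal_density 0 \<sigma> x))"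
    by simp
  \<comment> \<open>By symmetry \<open>X \<le> a\<close> and \<open>-a \<le> X\<close> are equally likely; they cover the space and overlap in \<open>[-a, a]\<close>.\<close>
  have "prob {\<omega>\<in>space M. X \<omega> \<le> a} = prob ((\<lambda>\<omega>. - X \<omega>) -` {-a..} \<inter> space M)"
    by (intro arg_cong[where f=prob]) auto
  also have "\<dots> = prob (X -` {-a..} \<inter> space M)"
  proof -
    have "ennreal (prob ((\<lambda>\<omega>. - X \<omega>) -` {-a..} \<inter> space M)) = ennreal (prob (X -` {-a..} \<inter> space M))"
      using distributed_emeasure[OF negX, of "{-a..}"] distributed_emeasure[OF X, of "{-a..}"]
      by (simp add: emeasure_eq_measure)
    then show ?thesis
      by simp
  qed
  finally have symm: "prob {\<omega>\<in>space M. X \<omega> \<le> a} = prob {\<omega>\<in>space M. -a \<le> X \<omega>}"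
    by (simp add: vimage_def Int_def conj_commute)
  have middle: "prob (X -` {-a..a} \<inter> space M) \<le> 2 * a / \<sigma>"
    using prob_interval_le_of_density_bound[OF X normal_density_le_inverse_std, of "-a" a] assms
    by simp
  have "prob (space M) = prob ({\<omega>\<in>space M. -a \<le> X \<omega>} \<union> {\<omega>\<in>space M. X \<omega> \<le> a})"
    using \<open>0 \<le> a\<close> by (intro arg_cong[where f=prob]) auto
  also have "\<dots> = prob {\<omega>\<in>space M. -a \<le> X \<omega>} + prob {\<omega>\<in>space M. X \<omega> \<le> a}
      - prob ({\<omega>\<in>space M. -a \<le> X \<omega>} \<inter> {\<omega>\<in>space M. X \<omega> \<le> a})"
    by (rule measure_Un3) (auto simp: fmeasurable_def emeasure_eq_measure)
  also have "{\<omega>\<in>space M. -a \<le> X \<omega>} \<inter> {\<omega>\<in>space M. X \<omega> \<le> a} = X -` {-a..a} \<inter> space M"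
    by auto
  finally show ?thesis
    using symm middle prob_space by (simp add: field_simps)
qed

lemma (in prob_space) prob_normal_gt_le:
  assumes X: "distributed M lborel X (\<lambda>x. ennreal (normal_density 0 \<sigma> x))"
    and "0 < \<sigma>" and "0 < a"
  shows "prob {\<omega>\<in>space M. a < X \<omega>} \<le> \<sigma>\<^sup>2 / a\<^sup>2"
proof -
  have [measurable]: "X \<in> borel_measurable M"
    using distributed_measurable[OF X] by simp
  have "integrable lborel (\<lambda>x. normal_density 0 \<sigma> x * x^2)"
    using integrable_normal_moment[OF \<open>0 < \<sigma>\<close>, of 0 2] by simp
  then have "integrable M (\<lambda>\<omega>. X \<omega> ^ 2)"
    using distributed_integrable[OF X, of "\<lambda>x. x^2"] by simp
  then have "prob {\<omega>\<in>space M. a \<le> \<bar>X \<omega> - expectation X\<bar>} \<le> variance X / a\<^sup>2"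
    using \<open>0 < a\<close> by (intro Chebyshev_inequality) auto
  moreover have "expectation X = 0" "variance X = \<sigma>\<^sup>2"
    using normal_distributed_expectation[OF \<open>0 < \<sigma>\<close> X] normal_distributed_variance[OF \<open>0 < \<sigma>\<close> X]
    by simp_all
  moreover have "prob {\<omega>\<in>space M. a < X \<omega>} \<le> prob {\<omega>\<in>space M. a \<le> \<bar>X \<omega>\<bar>}"
    by (intro finite_measure_mono) auto
  ultimately show ?thesis
    by simp
qed

lemma (in prob_space) prob_indep_normals_ge_neg_quarter_std_le:
  assumes indep: "indep_vars (\<lambda>_. borel) X J" and "finite J"
    and X: "\<And>j. j \<in> J \<Longrightarrow> distributed M lborel (X j) (\<lambda>x. ennreal (normal_density 0 (\<sigma> j) x))"
    and \<sigma>: "\<And>j. j \<in> J \<Longrightarrow> 0 < \<sigma> j"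
  shows "prob {\<omega>\<in>space M. \<forall>j\<in>J. - \<sigma> j / 4 \<le> X j \<omega>} \<le> (3/4) ^ card J"
proof (cases "J = {}")
  case True
  then show ?thesis
    by simp
next
  case False
  have "{\<omega>\<in>space M. \<forall>j\<in>J. - \<sigma> j / 4 \<le> X j \<omega>} = (\<Inter>j\<in>J. X j -` {- \<sigma> j / 4..} \<inter> space M)"
    using False by auto
  also have "prob \<dots> = (\<Prod>j\<in>J. prob (X j -` {- \<sigma> j / 4..} \<inter> space M))"
    using False \<open>finite J\<close> by (intro indep_varsD[OF indep]) auto
  also have "\<dots> \<le> (\<Prod>j\<in>J. 3/4)"
  proof (intro prod_mono conjI)
    fix j assume "j \<in> J"
    have "prob (X j -` {- \<sigma> j / 4..} \<inter> space M) = prob {\<omega>\<in>space M. - (\<sigma> j / 4) \<le> X j \<omega>}"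
      by (intro arg_cong[where f=prob]) auto
    also have "\<dots> \<le> 1/2 + (\<sigma> j / 4) / \<sigma> j"
      using \<sigma>[OF \<open>j \<in> J\<close>] by (intro prob_normal_ge_neg_le[OF X[OF \<open>j \<in> J\<close>]]) auto
    finally show "prob (X j -` {- \<sigma> j / 4..} \<inter> space M) \<le> 3/4"
      using \<sigma>[OF \<open>j \<in> J\<close>] by simp
  qed simp
  finally show ?thesis
    by simp
qed

lemma (in prob_space) prob_limit_eq_0_le:
  assumes Y: "\<And>m. Y m \<in> borel_measurable M"
    and lim: "\<And>\<omega>. \<omega> \<in> space M \<Longrightarrow> (\<lambda>m. Y m \<omega>) \<longlonglongrightarrow> F \<omega>"
    and small_ball: "\<And>m \<epsilon>. 0 < \<epsilon> \<Longrightarrow> prob {\<omega>\<in>space M. \<bar>Y m \<omega>\<bar> \<le> \<epsilon>} \<le> C * \<epsilon>"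
    and "0 < \<epsilon>"
  shows "prob {\<omega>\<in>space M. F \<omega> = 0} \<le> C * \<epsilon>"
proof -
  define E where "E n = {\<omega>\<in>space M. \<forall>m\<ge>n. \<bar>Y m \<omega>\<bar> \<le> \<epsilon>}" for n
  have E_sets: "range E \<subseteq> events"
    using Y unfolding E_def by auto
  have "{\<omega>\<in>space M. F \<omega> = 0} \<subseteq> (\<Union>n. E n)"
  proof
    fix \<omega> assume \<omega>: "\<omega> \<in> {\<omega>\<in>space M. F \<omega> = 0}"
    then have "\<omega> \<in> space M" "(\<lambda>m. Y m \<omega>) \<longlonglongrightarrow> 0"
      using lim[of \<omega>] by auto
    then obtain n where "\<forall>m\<ge>n. \<bar>Y m \<omega>\<bar> < \<epsilon>"
      using \<open>0 < \<epsilon>\<close> by (auto dest!: LIMSEQ_D)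
    then show "\<omega> \<in> (\<Union>n. E n)"
      using \<open>\<omega> \<in> space M\<close> unfolding E_def by (blast intro: less_imp_le)
  qed
  moreover have "(\<Union>n. E n) \<in> events"
    using E_sets by auto
  ultimately have "prob {\<omega>\<in>space M. F \<omega> = 0} \<le> prob (\<Union>n. E n)"
    by (rule finite_measure_mono)
  moreover have "(\<lambda>n. prob (E n)) \<longlonglongrightarrow> prob (\<Union>n. E n)"
    using E_sets by (intro finite_Lim_measure_incseq) (auto simp: incseq_def E_def)
  moreover have "prob (E n) \<le> C * \<epsilon>" for n
  proof -
    have "prob (E n) \<le> prob {\<omega>\<in>space M. \<bar>Y n \<omega>\<bar> \<le> \<epsilon>}"
      using Y by (intro finite_measure_mono) (auto simp: E_def)
    then show ?thesis
      using small_ball[OF \<open>0 < \<epsilon>\<close>, of n] by linarith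
  qed
  ultimately show ?thesis
    by (meson LIMSEQ_le_const2 order_trans)
qed

lemma (in prob_space) null_sets_limit_eq_0:
  assumes Y: "\<And>m. Y m \<in> borel_measurable M"
    and lim: "\<And>\<omega>. \<omega> \<in> space M \<Longrightarrow> (\<lambda>m. Y m \<omega>) \<longlonglongrightarrow> F \<omega>"
    and small_ball: "\<And>m \<epsilon>. 0 < \<epsilon> \<Longrightarrow> prob {\<omega>\<in>space M. \<bar>Y m \<omega>\<bar> \<le> \<epsilon>} \<le> C * \<epsilon>"
  shows "{\<omega>\<in>space M. F \<omega> = 0} \<in> null_sets M"
proof -
  have [measurable]: "F \<in> borel_measurable M"
    using lim Y by (rule borel_measurable_LIMSEQ_real)
  have "prob {\<omega>\<in>space M. F \<omega> = 0} \<le> 0"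
  proof (rule tendsto_lowerbound)
    show "((\<lambda>\<epsilon>. C * \<epsilon>) \<longlongrightarrow> 0) (at_right 0)"
      by (auto intro!: tendsto_eq_intros)
    have "prob {\<omega>\<in>space M. F \<omega> = 0} \<le> C * \<epsilon>" if "0 < \<epsilon>" for \<epsilon>
      using Y lim small_ball that by (rule prob_limit_eq_0_le)
    then show "\<forall>\<^sub>F \<epsilon> in at_right 0. prob {\<omega>\<in>space M. F \<omega> = 0} \<le> C * \<epsilon>"
      by (auto simp: eventually_at_right_field intro: exI[of _ 1])
  qed simp
  then show ?thesis
    using measure_nonneg[of M "{\<omega>\<in>space M. F \<omega> = 0}"]
    by (auto simp: emeasure_eq_measure intro!: null_setsI)
qed

lemma (in prob_space) indep_var_first_rest:
  fixes n :: nat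
  assumes indep: "indep_vars (\<lambda>_. borel) X {..n}"
    and \<Phi>: "\<Phi> \<in> borel_measurable (Pi\<^sub>M {1..n} (\<lambda>_. borel))"
  shows "indep_var borel (X 0) borel (\<lambda>\<omega>. \<Phi> (\<lambda>i\<in>{1..n}. X i \<omega>))"
proof -
  have "indep_var borel ((\<lambda>x. x 0) \<circ> (\<lambda>\<omega>. \<lambda>i\<in>{0}. X i \<omega>)) borel (\<Phi> \<circ> (\<lambda>\<omega>. \<lambda>i\<in>{1..n}. X i \<omega>))"
    by (intro indep_var_compose[OF indep_var_restrict[OF indep]] \<Phi>) auto
  then show ?thesis
    by (simp add: comp_def)
qed

definition dyadic_point :: "real \<Rightarrow> real \<Rightarrow> nat \<Rightarrow> nat \<Rightarrow> real" where
  "dyadic_point a b m k = a + (b - a) * k / 2 ^ m"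

definition dyadic_min :: "(real \<Rightarrow> real) \<Rightarrow> real \<Rightarrow> real \<Rightarrow> nat \<Rightarrow> real" where
  "dyadic_min h a b m = Min ((\<lambda>k. h (dyadic_point a b m k)) ` {..2 ^ m})"

lemma dyadic_point_0 [simp]: "dyadic_point a b m 0 = a"
  by (simp add: dyadic_point_def)

lemma dyadic_point_in_interval:
  assumes "a \<le> b" "k \<le> 2 ^ m"
  shows "dyadic_point a b m k \<in> {a..b}"
proof -
  have "real k \<le> 2 ^ m"
    using assms(2) by (metis of_nat_le_iff of_nat_numeral of_nat_power)
  then have "(b - a) * real k \<le> (b - a) * 2 ^ m"
    using assms(1) by (intro mult_left_mono) auto
  then have "(b - a) * real k / 2 ^ m \<le> b - a"
    by (simp add: divide_le_eq)
  then show ?thesis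
    using assms(1) by (simp add: dyadic_point_def)
qed

lemma dyadic_point_refine:
  assumes "m \<le> m'"
  shows "dyadic_point a b m' (k * 2 ^ (m' - m)) = dyadic_point a b m k"
proof -
  have "(2::real) ^ m' = 2 ^ m * 2 ^ (m' - m)"
    using assms by (simp flip: power_add)
  then show ?thesis
    by (simp add: dyadic_point_def)
qed

lemma strict_mono_dyadic_point:
  assumes "a < b"
  shows "strict_mono (dyadic_point a b m)"
  using assms by (auto intro!: strict_monoI simp: dyadic_point_def divide_strict_right_mono)

lemma strict_mono_shifted_dyadic_point:
  assumes "0 < a" "a < b"
  shows "strict_mono (\<lambda>j. if j = 0 then 0 else dyadic_point a b m (j - 1))"
proof (rule strict_monoI)
  fix i j :: nat assume "i < j"
  have "a \<le> dyadic_point a b m (j - 1)"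
    using strict_mono_less_eq[OF strict_mono_dyadic_point[OF \<open>a < b\<close>, of m], of 0 "j - 1"] by simp
  then show "(if i = 0 then 0 else dyadic_point a b m (i - 1)) < (if j = 0 then 0 else dyadic_point a b m (j - 1))"
    using \<open>i < j\<close> \<open>0 < a\<close> strict_mono_dyadic_point[OF \<open>a < b\<close>, of m]
    by (auto simp: strict_mono_def)
qed

lemma dyadic_point_right_approx:
  assumes "a < b" "s \<in> {a..b}" "0 < \<eta>"
  obtains m k where "k \<le> 2 ^ m" "s \<le> dyadic_point a b m k" "dyadic_point a b m k < s + \<eta>"
proof -
  obtain m where m: "(b - a) / \<eta> < 2 ^ m"
    using real_arch_pow[of 2 "(b - a) / \<eta>"] by auto
  then have mesh: "(b - a) / 2 ^ m < \<eta>"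
    using \<open>0 < \<eta>\<close> by (simp add: field_simps)
  define q where "q = (s - a) * 2 ^ m / (b - a)"
  have q: "0 \<le> q" "q \<le> 2 ^ m"
    using assms by (auto simp: q_def field_simps)
  define k where "k = nat \<lceil>q\<rceil>"
  have k: "q \<le> real k" "real k < q + 1"
    using q by (auto simp: k_def) linarith
  have "k \<le> 2 ^ m"
    using q(2) unfolding k_def by (simp add: nat_le_iff ceiling_le_iff)
  moreover have "dyadic_point a b m k = s + (b - a) * (real k - q) / 2 ^ m"
    using assms by (simp add: dyadic_point_def q_def field_simps)
  moreover have "(b - a) * (real k - q) / 2 ^ m < (b - a) / 2 ^ m"
    using assms k by (intro divide_strict_right_mono) auto
  moreover have "0 \<le> (b - a) * (real k - q) / 2 ^ m"
    using assms k by simp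
  ultimately show ?thesis
    using mesh by (intro that) auto
qed

lemma dyadic_min_antimono:
  assumes "m \<le> m'"
  shows "dyadic_min h a b m' \<le> dyadic_min h a b m"
  unfolding dyadic_min_def
proof (rule Min_antimono)
  show "(\<lambda>k. h (dyadic_point a b m k)) ` {..2 ^ m} \<subseteq> (\<lambda>k. h (dyadic_point a b m' k)) ` {..2 ^ m'}"
  proof safe
    fix k :: nat assume "k \<le> 2 ^ m"
    then have "k * 2 ^ (m' - m) \<le> 2 ^ m * 2 ^ (m' - m)"
      by simp
    also have "\<dots> = 2 ^ m'"
      using assms by (simp flip: power_add)
    finally show "h (dyadic_point a b m k) \<in> (\<lambda>k. h (dyadic_point a b m' k)) ` {..2 ^ m'}"
      using dyadic_point_refine[OF assms] by (auto intro!: image_eqI[where x="k * 2 ^ (m' - m)"])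
  qed
qed auto

lemma Inf_le_dyadic_min:
  assumes "a \<le> b" "bdd_below (h ` {a..b})"
  shows "(INF s\<in>{a..b}. h s) \<le> dyadic_min h a b m"
proof -
  have "dyadic_min h a b m \<in> (\<lambda>k. h (dyadic_point a b m k)) ` {..2 ^ m}"
    unfolding dyadic_min_def by (intro Min_in) auto
  then obtain k where "k \<le> 2 ^ m" "dyadic_min h a b m = h (dyadic_point a b m k)"
    by auto
  then show ?thesis
    using assms dyadic_point_in_interval by (auto intro: cINF_lower)
qed

lemma dyadic_min_le:
  assumes "k \<le> 2 ^ m"
  shows "dyadic_min h a b m \<le> h (dyadic_point a b m k)"
  using assms unfolding dyadic_min_def by (intro Min_le) auto

lemma dyadic_min_add_const:
  "dyadic_min (\<lambda>s. h s + c) a b m = dyadic_min h a b m + c"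
  unfolding dyadic_min_def by (subst Min_add_commute) auto

lemma dyadic_min_tendsto_Inf:
  assumes "a < b" and bdd: "bdd_below (h ` {a..b})"
    and right_cont: "\<And>s. s \<in> {a..<b} \<Longrightarrow> (h \<longlongrightarrow> h s) (at_right s)"
  shows "(\<lambda>m. dyadic_min h a b m) \<longlonglongrightarrow> (INF s\<in>{a..b}. h s)"
proof (rule order_tendstoI)
  let ?I = "INF s\<in>{a..b}. h s"
  fix y assume "y < ?I"
  then show "\<forall>\<^sub>F m in sequentially. y < dyadic_min h a b m"
    using Inf_le_dyadic_min[OF less_imp_le[OF \<open>a < b\<close>] bdd]
    by (auto intro!: always_eventually intro: less_le_trans)
next
  let ?I = "INF s\<in>{a..b}. h s"
  fix y assume "?I < y"
  then obtain s where s: "s \<in> {a..b}" "h s < y"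
    using \<open>a < b\<close> bdd by (auto simp: cINF_less_iff)
  obtain \<eta> where "0 < \<eta>" and \<eta>: "\<And>u. s < u \<Longrightarrow> u < s + \<eta> \<Longrightarrow> u \<le> b \<Longrightarrow> h u < y"
  proof (cases "s < b")
    case True
    then have "\<forall>\<^sub>F u in at_right s. h u < y"
      using right_cont[of s] s by (auto intro: order_tendstoD)
    then obtain c where "c > s" "\<And>u. s < u \<Longrightarrow> u < c \<Longrightarrow> h u < y"
      by (auto simp: eventually_at_right_field)
    then show ?thesis
      by (intro that[of "c - s"]) auto
  next
    case False
    then show ?thesis
      using s by (intro that[of 1]) auto
  qed
  then obtain m k where k: "k \<le> 2 ^ m" "s \<le> dyadic_point a b m k" "dyadic_point a b m k < s + \<eta>"
    using dyadic_point_right_approx[OF \<open>a < b\<close> s(1)] by blast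
  have "h (dyadic_point a b m k) < y"
    using k s \<eta>[of "dyadic_point a b m k"] dyadic_point_in_interval[of a b k m] \<open>a < b\<close>
    by (cases "dyadic_point a b m k = s") auto
  then have "dyadic_min h a b n < y" if "m \<le> n" for n
    using dyadic_min_antimono[OF that, of h a b] dyadic_min_le[OF k(1), of h a b] by linarith
  then show "\<forall>\<^sub>F n in sequentially. dyadic_min h a b n < y"
    by (auto simp: eventually_sequentially)
qed

lemma Inf_from_right_eq_of_above:
  fixes h :: "real \<Rightarrow> real"
  assumes bdd: "bdd_below (h ` {a..b})" and "a \<le> \<delta>" "\<delta> \<le> b"
    and "(INF s\<in>{a..b}. h s) < c" and above: "\<And>s. a \<le> s \<Longrightarrow> s < \<delta> \<Longrightarrow> c \<le> h s"
  shows "(INF s\<in>{\<delta>..b}. h s) = (INF s\<in>{a..b}. h s)"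
proof (rule antisym)
  let ?I = "INF s\<in>{a..b}. h s" and ?J = "INF s\<in>{\<delta>..b}. h s"
  have bdd': "bdd_below (h ` {\<delta>..b})"
    using bdd by (rule bdd_below_mono) (use \<open>a \<le> \<delta>\<close> in auto)
  have "min c ?J \<le> h s" if "s \<in> {a..b}" for s
  proof (cases "s < \<delta>")
    case True
    then show ?thesis
      using above[of s] that by simp
  next
    case False
    then have "?J \<le> h s"
      using that by (intro cINF_lower[OF bdd']) auto
    then show ?thesis
      by simp
  qed
  then have "min c ?J \<le> ?I"
    using assms by (intro cINF_greatest) auto
  then show "?J \<le> ?I"
    using \<open>?I < c\<close> by linarith
  show "?I \<le> ?J"
    using assms by (intro cINF_superset_mono) auto
qed

lemma eventually_Inf_from_right_eq:
  fixes h :: "real \<Rightarrow> real"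
  assumes "a < b" and bdd: "bdd_below (h ` {a..b})"
    and right_cont: "(h \<longlongrightarrow> h a) (at_right a)"
    and below_start: "(INF s\<in>{a..b}. h s) < h a"
  shows "\<forall>\<^sub>F \<delta> in at_right a. (INF s\<in>{\<delta>..b}. h s) = (INF s\<in>{a..b}. h s)"
proof -
  define c where "c = ((INF s\<in>{a..b}. h s) + h a) / 2"
  have "(INF s\<in>{a..b}. h s) < c" "c < h a"
    using below_start by (auto simp: c_def)
  have "\<forall>\<^sub>F u in at_right a. c < h u"
    using right_cont \<open>c < h a\<close> by (rule order_tendstoD)
  then obtain d where "a < d" and above_c: "\<And>u. a < u \<Longrightarrow> u < d \<Longrightarrow> c < h u"
    by (auto simp: eventually_at_right_field)
  have "(INF s\<in>{\<delta>..b}. h s) = (INF s\<in>{a..b}. h s)" if "a < \<delta>" "\<delta> < min d b" for \<delta>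
  proof (rule Inf_from_right_eq_of_above[OF bdd])
    show "c \<le> h s" if "a \<le> s" "s < \<delta>" for s
      using \<open>c < h a\<close> above_c[of s] \<open>\<delta> < min d b\<close> that by (cases "s = a") auto
  qed (use that \<open>(INF s\<in>{a..b}. h s) < c\<close> in auto)
  then show ?thesis
    using \<open>a < b\<close> \<open>a < d\<close> by (auto simp: eventually_at_right_field intro!: exI[of _ "min d b"])
qed

locale brownian_motion =
  fixes M :: "'a measure" and W :: "real \<Rightarrow> 'a \<Rightarrow> real"
  assumes std_BM: "std_BM M W"
begin

sublocale prob_space M
  using std_BM by (simp add: std_BM_def)

lemma W_measurable: "0 \<le> s \<Longrightarrow> W s \<in> borel_measurable M"
  using std_BM by (simp add: std_BM_def)

lemma W_0: "\<omega> \<in> space M \<Longrightarrow> W 0 \<omega> = 0"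
  using std_BM by (simp add: std_BM_def)

lemma W_continuous_on: "\<omega> \<in> space M \<Longrightarrow> continuous_on {0..} (\<lambda>s. W s \<omega>)"
  using std_BM by (simp add: std_BM_def)

lemma increment_distributed:
  "0 \<le> s \<Longrightarrow> s < u \<Longrightarrow>
    distributed M lborel (\<lambda>\<omega>. W u \<omega> - W s \<omega>) (\<lambda>x. ennreal (normal_density 0 (sqrt (u - s)) x))"
  using std_BM by (simp add: std_BM_def)

lemma W_distributed:
  assumes "0 < s"
  shows "distributed M lborel (W s) (\<lambda>x. ennreal (normal_density 0 (sqrt s) x))"
proof -
  have "distributed M lborel (\<lambda>\<omega>. W s \<omega> - W 0 \<omega>) (\<lambda>x. ennreal (normal_density 0 (sqrt s) x))"
    using increment_distributed[of 0 s] assms by simp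
  then show ?thesis
    by (simp add: distributed_def W_0 cong: distr_cong measurable_cong)
qed

lemma indep_increments:
  assumes "strict_mono_on {..n} \<tau>" "0 \<le> \<tau> 0"
  shows "indep_vars (\<lambda>_. borel) (\<lambda>j \<omega>. W (\<tau> (Suc j)) \<omega> - W (\<tau> j) \<omega>) {..<n}"
proof -
  define ts where "ts = map \<tau> [0..<Suc n]"
  have nth_ts: "ts ! i = \<tau> i" if "i \<le> n" for i
    using that by (simp add: ts_def nth_map_upt del: upt_Suc)
  have len_ts: "length ts = Suc n"
    by (simp add: ts_def)
  have "sorted_wrt (<) ts"
    unfolding sorted_wrt_iff_nth_less len_ts
    using strict_mono_onD[OF assms(1)] by (auto simp: nth_ts)
  moreover have "\<forall>s\<in>set ts. 0 \<le> s"
  proof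
    fix s assume "s \<in> set ts"
    then obtain i where "i \<le> n" "s = \<tau> i"
      by (auto simp: ts_def less_Suc_eq_le simp del: upt_Suc)
    then show "0 \<le> s"
      using strict_mono_on_leD[OF assms(1), of 0 i] assms(2) by auto
  qed
  ultimately have "indep_vars (\<lambda>_. borel) (\<lambda>i \<omega>. W (ts ! Suc i) \<omega> - W (ts ! i) \<omega>) {..<length ts - 1}"
    using std_BM by (simp add: std_BM_def)
  then show ?thesis
    by (rule indep_vars_cong[THEN iffD1, rotated -1]) (auto simp: len_ts nth_ts)
qed

lemma path_bdd_below:
  assumes "\<omega> \<in> space M" "0 \<le> a" "mono_on {0..} f"
  shows "bdd_below ((\<lambda>s. W s \<omega> - f s) ` {a..b})"
proof -
  have "continuous_on {a..b} (\<lambda>s. W s \<omega>)"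
    using W_continuous_on[OF assms(1)] by (rule continuous_on_subset) (use assms(2) in auto)
  then have "bdd_below ((\<lambda>s. W s \<omega>) ` {a..b})"
    by (intro bounded_imp_bdd_below compact_imp_bounded compact_continuous_image) auto
  then obtain c where c: "\<forall>s\<in>{a..b}. c \<le> W s \<omega>"
    by (auto simp: bdd_below_def)
  have "c - f b \<le> W s \<omega> - f s" if "s \<in> {a..b}" for s
    using c[rule_format, OF that] mono_onD[OF assms(3), of s b] that assms(2) by auto
  then show ?thesis
    by (auto simp: bdd_below_def intro: exI[of _ "c - f b"])
qed

lemma path_tendsto_at_right:
  assumes "\<omega> \<in> space M" "0 \<le> s" "(f \<longlongrightarrow> f s) (at_right s)"
  shows "((\<lambda>u. W u \<omega> - f u) \<longlongrightarrow> W s \<omega> - f s) (at_right s)"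
proof -
  have "((\<lambda>u. W u \<omega>) \<longlongrightarrow> W s \<omega>) (at s within {0..})"
    using W_continuous_on[OF assms(1)] assms(2) by (simp add: continuous_on_def)
  then have "((\<lambda>u. W u \<omega>) \<longlongrightarrow> W s \<omega>) (at_right s)"
    by (rule tendsto_within_subset) (use assms(2) in auto)
  then show ?thesis
    using assms(3) by (rule tendsto_diff)
qed

lemma dyadic_min_path_measurable:
  assumes "0 \<le> a" "a \<le> b"
  shows "(\<lambda>\<omega>. dyadic_min (\<lambda>s. W s \<omega> - f s) a b m) \<in> borel_measurable M"
proof -
  have "W (dyadic_point a b m k) \<in> borel_measurable M" if "k \<le> 2 ^ m" for k
    using dyadic_point_in_interval[OF assms(2) that] assms(1) by (intro W_measurable) auto
  then show ?thesis
    unfolding dyadic_min_def by (intro borel_measurable_Min borel_measurable_diff) auto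
qed

lemma dyadic_min_path_tendsto:
  assumes "mono_on {0..} f" and f_right_cont: "\<And>s. 0 \<le> s \<Longrightarrow> (f \<longlongrightarrow> f s) (at_right s)"
    and "\<omega> \<in> space M" "0 \<le> a" "a < b"
  shows "(\<lambda>m. dyadic_min (\<lambda>s. W s \<omega> - f s) a b m) \<longlonglongrightarrow> (INF s\<in>{a..b}. W s \<omega> - f s)"
  using assms path_bdd_below[OF assms(3,4,1)]
  by (intro dyadic_min_tendsto_Inf path_tendsto_at_right f_right_cont) auto

lemma path_Inf_measurable:
  assumes "mono_on {0..} f" "\<And>s. 0 \<le> s \<Longrightarrow> (f \<longlongrightarrow> f s) (at_right s)"
    and "0 \<le> a" "a < b"
  shows "(\<lambda>\<omega>. INF s\<in>{a..b}. W s \<omega> - f s) \<in> borel_measurable M"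
proof (rule borel_measurable_LIMSEQ_real)
  show "(\<lambda>m. dyadic_min (\<lambda>s. W s \<omega> - f s) a b m) \<longlonglongrightarrow> (INF s\<in>{a..b}. W s \<omega> - f s)"
    if "\<omega> \<in> space M" for \<omega>
    using assms(1,2) that assms(3,4) by (rule dyadic_min_path_tendsto)
  show "(\<lambda>\<omega>. dyadic_min (\<lambda>s. W s \<omega> - f s) a b m) \<in> borel_measurable M" for m
    using assms by (intro dyadic_min_path_measurable) auto
qed

lemma indep_increment_dyadic_min_after:
  assumes "0 < \<delta>" "\<delta> < t"
  shows "indep_var borel (\<lambda>\<omega>. W \<delta> \<omega> - W 0 \<omega>) borel
    (\<lambda>\<omega>. dyadic_min (\<lambda>s. W s \<omega> - W \<delta> \<omega> - f s) \<delta> t m)"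
proof -
  \<comment> \<open>The first increment along \<open>\<tau>\<close> is \<open>W \<delta> - W 0\<close>; the partial sums of the others are the
    values \<open>W s - W \<delta>\<close> at the grid points \<open>s\<close>.\<close>
  define \<tau> where "\<tau> j = (if j = 0 then 0 else dyadic_point \<delta> t m (j - 1))" for j
  define I where "I j \<omega> = W (\<tau> (Suc j)) \<omega> - W (\<tau> j) \<omega>" for j \<omega>
  have "strict_mono_on {..Suc (2 ^ m)} \<tau>"
    using strict_mono_shifted_dyadic_point[OF assms, of m]
    unfolding \<tau>_def by (simp add: strict_mono_on_def strict_mono_def)
  then have "indep_vars (\<lambda>_. borel) I {..<Suc (2 ^ m)}"
    unfolding I_def by (rule indep_increments) (simp add: \<tau>_def)
  then have indep: "indep_vars (\<lambda>_. borel) I {..2 ^ m}"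
    by (simp add: lessThan_Suc_atMost)
  define \<Phi> :: "(nat \<Rightarrow> real) \<Rightarrow> real" where
    "\<Phi> x = Min ((\<lambda>k. (\<Sum>l<k. x (Suc l)) - f (dyadic_point \<delta> t m k)) ` {..2 ^ m})" for x
  have "\<Phi> \<in> borel_measurable (Pi\<^sub>M {1..2 ^ m} (\<lambda>_. borel))"
    unfolding \<Phi>_def
    by (intro borel_measurable_Min borel_measurable_diff borel_measurable_sum
        measurable_component_singleton borel_measurable_const finite_atMost) auto
  with indep have "indep_var borel (I 0) borel (\<lambda>\<omega>. \<Phi> (\<lambda>i\<in>{1..2 ^ m}. I i \<omega>))"
    by (rule indep_var_first_rest)
  moreover have "I 0 = (\<lambda>\<omega>. W \<delta> \<omega> - W 0 \<omega>)"
    by (simp add: I_def \<tau>_def fun_eq_iff)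
  moreover have "\<Phi> (\<lambda>i\<in>{1..2 ^ m}. I i \<omega>) = dyadic_min (\<lambda>s. W s \<omega> - W \<delta> \<omega> - f s) \<delta> t m" for \<omega>
  proof -
    have "(\<Sum>l<k. (\<lambda>i\<in>{1..2 ^ m}. I i \<omega>) (Suc l)) = W (dyadic_point \<delta> t m k) \<omega> - W \<delta> \<omega>"
      if "k \<le> 2 ^ m" for k
    proof -
      have "(\<Sum>l<k. (\<lambda>i\<in>{1..2 ^ m}. I i \<omega>) (Suc l))
          = (\<Sum>l<k. W (dyadic_point \<delta> t m (Suc l)) \<omega> - W (dyadic_point \<delta> t m l) \<omega>)"
        using that by (intro sum.cong) (auto simp: I_def \<tau>_def)
      also have "\<dots> = W (dyadic_point \<delta> t m k) \<omega> - W (dyadic_point \<delta> t m 0) \<omega>"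
        by (rule sum_lessThan_telescope)
      finally show ?thesis
        by simp
    qed
    then show ?thesis
      unfolding \<Phi>_def dyadic_min_def by (intro arg_cong[where f=Min] image_cong) auto
  qed
  ultimately show ?thesis
    by simp
qed

lemma prob_abs_dyadic_min_path_le:
  assumes "0 < \<delta>" "\<delta> < t" "0 \<le> \<epsilon>"
  shows "prob {\<omega>\<in>space M. \<bar>dyadic_min (\<lambda>s. W s \<omega> - f s) \<delta> t m\<bar> \<le> \<epsilon>} \<le> 2 * \<epsilon> / sqrt \<delta>"
proof -
  let ?Z = "\<lambda>\<omega>. dyadic_min (\<lambda>s. W s \<omega> - W \<delta> \<omega> - f s) \<delta> t m"
  have "dyadic_min (\<lambda>s. W s \<omega> - f s) \<delta> t m = (W \<delta> \<omega> - W 0 \<omega>) + ?Z \<omega>" if "\<omega> \<in> space M" for \<omega>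
    using dyadic_min_add_const[of "\<lambda>s. W s \<omega> - W \<delta> \<omega> - f s" "W \<delta> \<omega>"] W_0[OF that] by simp
  then have "{\<omega>\<in>space M. \<bar>dyadic_min (\<lambda>s. W s \<omega> - f s) \<delta> t m\<bar> \<le> \<epsilon>}
      = {\<omega>\<in>space M. \<bar>(W \<delta> \<omega> - W 0 \<omega>) + ?Z \<omega>\<bar> \<le> \<epsilon>}"
    by auto
  also have "prob \<dots> \<le> 2 * \<epsilon> * (1 / sqrt \<delta>)"
  proof (rule prob_abs_add_le_of_indep_density_bound)
    show "indep_var borel (\<lambda>\<omega>. W \<delta> \<omega> - W 0 \<omega>) borel ?Z"
      using assms by (intro indep_increment_dyadic_min_after)
    show "distributed M lborel (\<lambda>\<omega>. W \<delta> \<omega> - W 0 \<omega>) (\<lambda>x. ennreal (normal_density 0 (sqrt \<delta>) x))"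
      using increment_distributed[of 0 \<delta>] assms by simp
    show "normal_density 0 (sqrt \<delta>) x \<le> 1 / sqrt \<delta>" for x
      using assms by (intro normal_density_le_inverse_std) simp
  qed (use assms in simp_all)
  finally show ?thesis
    by simp
qed

lemma prob_W_gt_le:
  assumes "0 < s" "0 < a"
  shows "prob {\<omega>\<in>space M. a < W s \<omega>} \<le> s / a\<^sup>2"
  using prob_normal_gt_le[OF W_distributed] assms by simp

lemma prob_increments_ge_neg_quarter_std_le:
  assumes \<tau>_mono: "strict_mono_on {..K} \<tau>" and "0 \<le> \<tau> 0"
  shows "prob {\<omega>\<in>space M. \<forall>j<K. - sqrt (\<tau> (Suc j) - \<tau> j) / 4 \<le> W (\<tau> (Suc j)) \<omega> - W (\<tau> j) \<omega>}
    \<le> (3/4) ^ K"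
proof -
  have \<tau>_less: "\<tau> j < \<tau> (Suc j)" if "j < K" for j
    using strict_mono_onD[OF \<tau>_mono, of j "Suc j"] that by simp
  have "prob {\<omega>\<in>space M. \<forall>j\<in>{..<K}. - sqrt (\<tau> (Suc j) - \<tau> j) / 4 \<le> W (\<tau> (Suc j)) \<omega> - W (\<tau> j) \<omega>}
      \<le> (3/4) ^ card {..<K}"
  proof (rule prob_indep_normals_ge_neg_quarter_std_le)
    show "indep_vars (\<lambda>_. borel) (\<lambda>j \<omega>. W (\<tau> (Suc j)) \<omega> - W (\<tau> j) \<omega>) {..<K}"
      using assms by (rule indep_increments)
    show "distributed M lborel (\<lambda>\<omega>. W (\<tau> (Suc j)) \<omega> - W (\<tau> j) \<omega>)
        (\<lambda>x. ennreal (normal_density 0 (sqrt (\<tau> (Suc j) - \<tau> j)) x))" if "j \<in> {..<K}" for j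
      using that \<tau>_less strict_mono_on_leD[OF \<tau>_mono, of 0 j] \<open>0 \<le> \<tau> 0\<close>
      by (intro increment_distributed) auto
  qed (use \<tau>_less in auto)
  then show ?thesis
    by (simp add: Ball_def)
qed

lemma prob_UN_W_gt_quarter_std_le:
  assumes \<tau>_mono: "strict_mono_on {..K} \<tau>" and "0 < \<tau> 0"
  shows "prob (\<Union>j<K. {\<omega>\<in>space M. sqrt (\<tau> (Suc j) - \<tau> j) / 4 < W (\<tau> j) \<omega>})
    \<le> (\<Sum>j<K. 16 * \<tau> j / (\<tau> (Suc j) - \<tau> j))"
proof -
  have \<tau>_pos: "0 < \<tau> j" if "j \<le> K" for j
    using strict_mono_on_leD[OF \<tau>_mono, of 0 j] \<open>0 < \<tau> 0\<close> that by simp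
  have \<tau>_less: "\<tau> j < \<tau> (Suc j)" if "j < K" for j
    using strict_mono_onD[OF \<tau>_mono, of j "Suc j"] that by simp
  have [measurable]: "W (\<tau> j) \<in> borel_measurable M" if "j \<le> K" for j
    using \<tau>_pos[OF that] by (intro W_measurable less_imp_le)
  have "prob (\<Union>j<K. {\<omega>\<in>space M. sqrt (\<tau> (Suc j) - \<tau> j) / 4 < W (\<tau> j) \<omega>})
      \<le> (\<Sum>j<K. prob {\<omega>\<in>space M. sqrt (\<tau> (Suc j) - \<tau> j) / 4 < W (\<tau> j) \<omega>})"
    by (intro finite_measure_subadditive_finite) auto
  also have "\<dots> \<le> (\<Sum>j<K. \<tau> j / (sqrt (\<tau> (Suc j) - \<tau> j) / 4)\<^sup>2)"
    using \<tau>_pos \<tau>_less by (intro sum_mono prob_W_gt_le) auto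
  also have "\<dots> = (\<Sum>j<K. 16 * \<tau> j / (\<tau> (Suc j) - \<tau> j))"
  proof (rule sum.cong)
    fix j assume "j \<in> {..<K}"
    then have "0 \<le> \<tau> (Suc j) - \<tau> j"
      using \<tau>_less[of j] by simp
    then show "\<tau> j / (sqrt (\<tau> (Suc j) - \<tau> j) / 4)\<^sup>2 = 16 * \<tau> j / (\<tau> (Suc j) - \<tau> j)"
      by (simp add: power_divide)
  qed simp
  finally show ?thesis .
qed

lemma prob_nonneg_at_times_le:
  assumes \<tau>_mono: "strict_mono_on {..K} \<tau>" and "0 < \<tau> 0"
  shows "prob {\<omega>\<in>space M. \<forall>j\<le>K. 0 \<le> W (\<tau> j) \<omega>}
    \<le> (3/4) ^ K + (\<Sum>j<K. 16 * \<tau> j / (\<tau> (Suc j) - \<tau> j))"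
proof -
  have [measurable]: "W (\<tau> j) \<in> borel_measurable M" if "j \<le> K" for j
    using strict_mono_on_leD[OF \<tau>_mono, of 0 j] \<open>0 < \<tau> 0\<close> that by (intro W_measurable) simp
  define \<sigma> where "\<sigma> j = sqrt (\<tau> (Suc j) - \<tau> j)" for j
  define A where "A = {\<omega>\<in>space M. \<forall>j<K. - \<sigma> j / 4 \<le> W (\<tau> (Suc j)) \<omega> - W (\<tau> j) \<omega>}"
  define B where "B = (\<Union>j<K. {\<omega>\<in>space M. \<sigma> j / 4 < W (\<tau> j) \<omega>})"
  have "{\<omega>\<in>space M. \<forall>j\<le>K. 0 \<le> W (\<tau> j) \<omega>} \<subseteq> A \<union> B"
  proof safe
    fix \<omega> assume \<omega>: "\<omega> \<in> space M" "\<forall>j\<le>K. 0 \<le> W (\<tau> j) \<omega>" "\<omega> \<notin> B"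
    have "- \<sigma> j / 4 \<le> W (\<tau> (Suc j)) \<omega> - W (\<tau> j) \<omega>" if "j < K" for j
    proof -
      have "W (\<tau> j) \<omega> \<le> \<sigma> j / 4"
        using \<omega> that by (auto simp: B_def not_less)
      moreover have "0 \<le> W (\<tau> (Suc j)) \<omega>"
        using \<omega>(2) that by (simp add: Suc_leI)
      ultimately show ?thesis
        by simp
    qed
    then show "\<omega> \<in> A"
      using \<omega>(1) by (auto simp: A_def)
  qed
  moreover have "A \<in> events" "B \<in> events"
    by (auto simp: A_def B_def)
  ultimately have "prob {\<omega>\<in>space M. \<forall>j\<le>K. 0 \<le> W (\<tau> j) \<omega>} \<le> prob A + prob B"
    by (meson finite_measure_mono measure_Un_le order_trans sets.Un)
  moreover have "prob A \<le> (3/4) ^ K"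
    unfolding A_def \<sigma>_def using assms by (intro prob_increments_ge_neg_quarter_std_le) auto
  moreover have "prob B \<le> (\<Sum>j<K. 16 * \<tau> j / (\<tau> (Suc j) - \<tau> j))"
    unfolding B_def \<sigma>_def using assms by (rule prob_UN_W_gt_quarter_std_le)
  ultimately show ?thesis
    by linarith
qed

lemma prob_nonneg_at_geometric_times_le:
  assumes "0 < t" "0 < r" "r < 1"
  shows "prob {\<omega>\<in>space M. \<forall>j\<le>K. 0 \<le> W (t * r ^ j) \<omega>} \<le> (3/4) ^ K + K * (16 * r / (1 - r))"
proof -
  define \<tau> where "\<tau> j = t * r ^ (K - j)" for j
  have [measurable]: "W (\<tau> j) \<in> borel_measurable M" for j
    using assms by (intro W_measurable) (simp add: \<tau>_def)
  have "strict_mono_on {..K} \<tau>"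
    using assms by (auto intro!: strict_mono_onI power_strict_decreasing simp: \<tau>_def)
  moreover have "0 < \<tau> 0"
    using assms by (simp add: \<tau>_def)
  ultimately have "prob {\<omega>\<in>space M. \<forall>j\<le>K. 0 \<le> W (\<tau> j) \<omega>}
      \<le> (3/4) ^ K + (\<Sum>j<K. 16 * \<tau> j / (\<tau> (Suc j) - \<tau> j))"
    by (rule prob_nonneg_at_times_le)
  also have "(\<Sum>j<K. 16 * \<tau> j / (\<tau> (Suc j) - \<tau> j)) = (\<Sum>j<K. 16 * r / (1 - r))"
  proof (rule sum.cong)
    fix j assume "j \<in> {..<K}"
    then have "\<tau> j = r * \<tau> (Suc j)"
      by (simp add: \<tau>_def flip: Suc_diff_Suc)
    then show "16 * \<tau> j / (\<tau> (Suc j) - \<tau> j) = 16 * r / (1 - r)"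
      using assms by (simp add: \<tau>_def field_simps)
  qed simp
  finally have "prob {\<omega>\<in>space M. \<forall>j\<le>K. 0 \<le> W (\<tau> j) \<omega>} \<le> (3/4) ^ K + K * (16 * r / (1 - r))"
    by simp
  moreover have "{\<omega>\<in>space M. \<forall>j\<le>K. 0 \<le> W (t * r ^ j) \<omega>} \<subseteq> {\<omega>\<in>space M. \<forall>j\<le>K. 0 \<le> W (\<tau> j) \<omega>}"
    by (auto simp: \<tau>_def)
  moreover have "{\<omega>\<in>space M. \<forall>j\<le>K. 0 \<le> W (\<tau> j) \<omega>} \<in> events"
    by measurable
  ultimately show ?thesis
    by (meson finite_measure_mono order_trans)
qed

lemma prob_nonneg_on_interval_le:
  assumes "0 < t" "0 < r" "r < 1"
  shows "prob {\<omega>\<in>space M. \<forall>s\<in>{0..t}. 0 \<le> W s \<omega>} \<le> (3/4) ^ K + K * (16 * r / (1 - r))"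
proof -
  have [measurable]: "W (t * r ^ j) \<in> borel_measurable M" for j
    using assms by (intro W_measurable) simp
  have "t * r ^ j \<in> {0..t}" for j
    using assms by (auto intro: mult_left_le power_le_one)
  then have "{\<omega>\<in>space M. \<forall>s\<in>{0..t}. 0 \<le> W s \<omega>} \<subseteq> {\<omega>\<in>space M. \<forall>j\<le>K. 0 \<le> W (t * r ^ j) \<omega>}"
    by auto
  moreover have "{\<omega>\<in>space M. \<forall>j\<le>K. 0 \<le> W (t * r ^ j) \<omega>} \<in> events"
    by measurable
  ultimately have "prob {\<omega>\<in>space M. \<forall>s\<in>{0..t}. 0 \<le> W s \<omega>}
      \<le> prob {\<omega>\<in>space M. \<forall>j\<le>K. 0 \<le> W (t * r ^ j) \<omega>}"
    by (rule finite_measure_mono)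
  also have "\<dots> \<le> (3/4) ^ K + K * (16 * r / (1 - r))"
    using assms by (rule prob_nonneg_at_geometric_times_le)
  finally show ?thesis .
qed

lemma nonneg_on_interval_null:
  assumes "0 < t"
  shows "{\<omega>\<in>space M. \<forall>s\<in>{0..t}. 0 \<le> W s \<omega>} \<in> null_sets M"
proof -
  let ?S = "{\<omega>\<in>space M. \<forall>s\<in>{0..t}. 0 \<le> W s \<omega>}"
  have "bdd_below ((\<lambda>s. W s \<omega> - 0) ` {0..t})" if "\<omega> \<in> space M" for \<omega>
    using that by (intro path_bdd_below) (auto simp: mono_on_def)
  then have "?S = {\<omega>\<in>space M. 0 \<le> (INF s\<in>{0..t}. W s \<omega> - 0)}"
    using assms by (auto simp: le_cINF_iff)
  moreover have "(\<lambda>\<omega>. INF s\<in>{0..t}. W s \<omega> - 0) \<in> borel_measurable M"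
    using assms by (intro path_Inf_measurable) (auto simp: mono_on_def)
  ultimately have S_events: "?S \<in> events"
    by simp
  have "prob ?S \<le> (3/4) ^ K" for K :: nat
  proof (rule tendsto_lowerbound)
    show "((\<lambda>r. (3/4) ^ K + K * (16 * r / (1 - r))) \<longlongrightarrow> (3/4) ^ K) (at_right 0)"
      by (auto intro!: tendsto_eq_intros)
    show "\<forall>\<^sub>F r in at_right 0. prob ?S \<le> (3/4) ^ K + K * (16 * r / (1 - r))"
      using prob_nonneg_on_interval_le[OF assms]
      by (auto simp: eventually_at_right_field intro!: exI[of _ 1])
  qed simp
  then have "prob ?S \<le> 0"
    by (intro tendsto_lowerbound[OF LIMSEQ_power_zero[of "3/4 :: real"]]) auto
  then show ?thesis
    using S_events measure_nonneg[of M ?S] by (auto simp: emeasure_eq_measure intro!: null_setsI)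
qed

context
  fixes f :: "real \<Rightarrow> real"
  assumes f_mono: "mono_on {0..} f"
    and f_right_cont: "\<And>s. 0 \<le> s \<Longrightarrow> (f \<longlongrightarrow> f s) (at_right s)"
begin

lemma path_Inf_eq_0_null:
  assumes "0 < \<delta>" "\<delta> < t"
  shows "{\<omega>\<in>space M. (INF s\<in>{\<delta>..t}. W s \<omega> - f s) = 0} \<in> null_sets M"
proof (rule null_sets_limit_eq_0)
  show "(\<lambda>\<omega>. dyadic_min (\<lambda>s. W s \<omega> - f s) \<delta> t m) \<in> borel_measurable M" for m
    using assms by (intro dyadic_min_path_measurable) auto
  show "(\<lambda>m. dyadic_min (\<lambda>s. W s \<omega> - f s) \<delta> t m) \<longlonglongrightarrow> (INF s\<in>{\<delta>..t}. W s \<omega> - f s)"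
    if "\<omega> \<in> space M" for \<omega>
    using that assms by (intro dyadic_min_path_tendsto f_mono f_right_cont) auto
  show "prob {\<omega>\<in>space M. \<bar>dyadic_min (\<lambda>s. W s \<omega> - f s) \<delta> t m\<bar> \<le> \<epsilon>} \<le> 2 / sqrt \<delta> * \<epsilon>"
    if "0 < \<epsilon>" for m \<epsilon>
    using prob_abs_dyadic_min_path_le[OF assms, of \<epsilon> f m] that by simp
qed

lemma path_Inf_eq_0_null_start_below:
  assumes "0 < t" "0 \<le> f 0"
  shows "{\<omega>\<in>space M. (INF s\<in>{0..t}. W s \<omega> - f s) = 0} \<in> null_sets M"
proof (rule null_sets_subset[OF nonneg_on_interval_null[OF \<open>0 < t\<close>]])
  have [measurable]: "(\<lambda>\<omega>. INF s\<in>{0..t}. W s \<omega> - f s) \<in> borel_measurable M"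
    using \<open>0 < t\<close> by (intro path_Inf_measurable f_mono f_right_cont) auto
  show "{\<omega>\<in>space M. (INF s\<in>{0..t}. W s \<omega> - f s) = 0} \<in> events"
    by measurable
  show "{\<omega>\<in>space M. (INF s\<in>{0..t}. W s \<omega> - f s) = 0} \<subseteq> {\<omega>\<in>space M. \<forall>s\<in>{0..t}. 0 \<le> W s \<omega>}"
  proof safe
    fix \<omega> s assume "\<omega> \<in> space M" "(INF s\<in>{0..t}. W s \<omega> - f s) = 0" "s \<in> {0..t}"
    then have "0 \<le> W s \<omega> - f s"
      using path_bdd_below[OF \<open>\<omega> \<in> space M\<close> order_refl f_mono] by (metis cINF_lower)
    moreover have "f 0 \<le> f s"
      using \<open>s \<in> {0..t}\<close> by (intro mono_onD[OF f_mono]) auto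
    ultimately show "0 \<le> W s \<omega>"
      using assms by simp
  qed
qed

lemma path_Inf_eq_0_null_start_above:
  assumes "0 < t" "f 0 < 0"
  shows "{\<omega>\<in>space M. (INF s\<in>{0..t}. W s \<omega> - f s) = 0} \<in> null_sets M"
proof (rule null_sets_subset)
  let ?N = "\<lambda>\<delta>. {\<omega>\<in>space M. (INF s\<in>{\<delta>..t}. W s \<omega> - f s) = 0}"
  show "(\<Union>\<delta>\<in>\<rat> \<inter> {0<..<t}. ?N \<delta>) \<in> null_sets M"
    using countable_rat by (intro null_sets_UN' path_Inf_eq_0_null f_mono f_right_cont) auto
  have [measurable]: "(\<lambda>\<omega>. INF s\<in>{0..t}. W s \<omega> - f s) \<in> borel_measurable M"
    using \<open>0 < t\<close> by (intro path_Inf_measurable f_mono f_right_cont) auto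
  show "?N 0 \<in> events"
    by measurable
  show "?N 0 \<subseteq> (\<Union>\<delta>\<in>\<rat> \<inter> {0<..<t}. ?N \<delta>)"
  proof
    fix \<omega> assume "\<omega> \<in> ?N 0"
    then have \<omega>: "\<omega> \<in> space M" "(INF s\<in>{0..t}. W s \<omega> - f s) = 0"
      by auto
    have "\<forall>\<^sub>F \<delta> in at_right 0. (INF s\<in>{\<delta>..t}. W s \<omega> - f s) = (INF s\<in>{0..t}. W s \<omega> - f s)"
      using assms \<omega> W_0[OF \<omega>(1)]
      by (intro eventually_Inf_from_right_eq path_bdd_below path_tendsto_at_right f_mono f_right_cont) auto
    then obtain b where "0 < b" and b: "\<And>\<delta>. 0 < \<delta> \<Longrightarrow> \<delta> < b \<Longrightarrow> \<omega> \<in> ?N \<delta>"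
      using \<omega> by (auto simp: eventually_at_right_field)
    obtain \<delta> where "\<delta> \<in> \<rat>" "0 < \<delta>" "\<delta> < min b t"
      using Rats_dense_in_real[of 0 "min b t"] \<open>0 < b\<close> \<open>0 < t\<close> by auto
    then show "\<omega> \<in> (\<Union>\<delta>\<in>\<rat> \<inter> {0<..<t}. ?N \<delta>)"
      using b[of \<delta>] by auto
  qed
qed

end

end

theorem lemma4p5:
  fixes M :: "'a measure" and W :: "real \<Rightarrow> 'a \<Rightarrow> real" and f :: "real \<Rightarrow> real" and t :: real
  assumes "std_BM M W"
    and "mono_on {-1..} f"
    and "cadlag_on {-1..} f"
    and "t > 0"
  shows "{\<omega> \<in> space M. (INF s\<in>{0..t}. W s \<omega> - f s) = 0} \<in> null_sets M"
proof -
  interpret brownian_motion M W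
    by (rule brownian_motion.intro) fact
  have mono: "mono_on {0..} f"
    using assms(2) by (rule mono_on_subset) auto
  have right_cont: "(f \<longlongrightarrow> f s) (at_right s)" if "0 \<le> s" for s
  proof -
    have "(f \<longlongrightarrow> f s) (at s within {-1..} \<inter> {s<..})"
      using assms(3) that by (simp add: cadlag_on_def)
    moreover have "{-1..} \<inter> {s<..} = {s<..}"
      using that by auto
    ultimately show ?thesis
      by simp
  qed
  show ?thesis
  proof (cases "0 \<le> f 0")
    case True
    then show ?thesis
      using mono right_cont assms(4) by (intro path_Inf_eq_0_null_start_below)
  next
    case False
    then show ?thesis
      using mono right_cont assms(4) by (intro path_Inf_eq_0_null_start_above) auto
  qed
qed


end
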